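(* Consider the $r$-cGA (without frequency borders) maximizing $r$-OneMax on $\{0,\dots,r-1\}^n$, and suppose that at some time the frequency $p^{(t)}_{i,r-1}$ has reached a value of at least $k/r$, where $k>0$. Suppose $K\ge c\,r\sqrt{n}\log n$ for a sufficiently large constant $c$, and $K$ and $r$ are bounded by polynomials in $n$. Then, for a constant $c'>0$, the probability that $p^{(t)}_{i,r-1}$ drops below $k/r-1/(2r)$ within the next $T^{*}=c'K\sqrt{n}\log r$ iterations is at most $n^{-c''}$, where $c''\ge K/(288r\sqrt{n}\ln n)$.
   Context: Let $n\ge 1$, $r\ge 2$ be integers and $K>0$. $r$-OneMax$(x)=\sum_{i=1}^n \mathbf 1[x_i=r-1]$ for $x\in\{0,\dots,r-1\}^n$. The $r$-valued compact genetic algorithm ($r$-cGA) with parameter $K$ maintains frequencies $p^{(t)}_{i,j}$ for $i\in\{1,\dots,n\}$, $j\in\{0,\dots,r-1\}$, initially all $1/r$. In iteration $t$ it samples two strings $x,y$ independently, each position $i$ of each string taking value $j$ with probability $p^{(t)}_{i,j}$ independently of other positions; if $f(x)<f(y)$ then $x$ and $y$ are swapped; then for all $i,j$, $p^{(t+1)}_{i,j}=p^{(t)}_{i,j}+\frac1K(\mathbf 1[x_i=j]-\mathbf 1[y_i=j])$. Here $f$ is the function to be maximized. *)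

theory Defs
  imports "HOL-Probability.Probability"
begin

text \<open>Strings in {0,...,r-1}^n are modelled as functions nat => nat (positions 0..n-1).
  A state of the r-cGA is the frequency matrix p i j (position i < n, value j < r).\<close>

definition r_onemax :: "nat \<Rightarrow> nat \<Rightarrow> (nat \<Rightarrow> nat) \<Rightarrow> nat" where
  "r_onemax n r x = card {i. i < n \<and> x i = r - 1}"

text \<open>To make the
  definition total, negative entries are clipped to 0 and the weights renormalised;
  for genuine probability vectors this is exactly the distribution (p i j)_j.\<close>

definition pos_pmf :: "nat \<Rightarrow> (nat \<Rightarrow> nat \<Rightarrow> real) \<Rightarrow> nat \<Rightarrow> nat pmf" where
  "pos_pmf r p i =
     (let S = (\<Sum>j<r. max 0 (p i j)) in
      if S > 0 then embed_pmf (\<lambda>j. if j < r then max 0 (p i j) / S else 0)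
      else return_pmf 0)"

definition sample_string :: "nat \<Rightarrow> nat \<Rightarrow> (nat \<Rightarrow> nat \<Rightarrow> real) \<Rightarrow> (nat \<Rightarrow> nat) pmf" where
  "sample_string n r p = Pi_pmf {..<n} 0 (pos_pmf r p)"

definition cga_update :: "real \<Rightarrow> (nat \<Rightarrow> nat \<Rightarrow> real) \<Rightarrow> (nat \<Rightarrow> nat) \<Rightarrow> (nat \<Rightarrow> nat)
    \<Rightarrow> (nat \<Rightarrow> nat \<Rightarrow> real)" where
  "cga_update K p x y =
     (\<lambda>i j. p i j + (1 / K) * ((if x i = j then 1 else 0) - (if y i = j then 1 else 0)))"

definition cga_step :: "nat \<Rightarrow> nat \<Rightarrow> real \<Rightarrow> (nat \<Rightarrow> nat \<Rightarrow> real) \<Rightarrow> (nat \<Rightarrow> nat \<Rightarrow> real) pmf" where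
  "cga_step n r K p =
     bind_pmf (sample_string n r p) (\<lambda>x.
     bind_pmf (sample_string n r p) (\<lambda>y.
       return_pmf (if r_onemax n r x < r_onemax n r y then cga_update K p y x
                   else cga_update K p x y)))"

definition cga_init :: "nat \<Rightarrow> nat \<Rightarrow> nat \<Rightarrow> real" where
  "cga_init r = (\<lambda>i j. 1 / real r)"

fun cga_state :: "nat \<Rightarrow> nat \<Rightarrow> real \<Rightarrow> nat \<Rightarrow> (nat \<Rightarrow> nat \<Rightarrow> real) pmf" where
  "cga_state n r K 0 = return_pmf (cga_init r)"
| "cga_state n r K (Suc t) = bind_pmf (cga_state n r K t) (cga_step n r K)"

fun cga_path :: "nat \<Rightarrow> nat \<Rightarrow> real \<Rightarrow> (nat \<Rightarrow> nat \<Rightarrow> real) \<Rightarrow> nat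
    \<Rightarrow> (nat \<Rightarrow> nat \<Rightarrow> real) list pmf" where
  "cga_path n r K p 0 = return_pmf []"
| "cga_path n r K p (Suc m) =
     bind_pmf (cga_step n r K p) (\<lambda>q. map_pmf (\<lambda>qs. q # qs) (cga_path n r K q m))"

end

theory Submission
  imports Defs
begin

(* Write q = p_{i,r-1} and l = 1/(144 sqrt n).  One iteration changes q by w/K with w in {-1,0,1},
   and w <> 0 only if the two samples differ at position i.  If in addition their numbers of
   r-1 entries at the other n-1 positions coincide, the sample with value r-1 at position i wins,
   so w = 1.  Such a tie has probability at least 1/(12 sqrt(n-1)) >= l: by Hoeffding the count
   lies in a window of width O(sqrt n) with probability 1/2, and Cauchy-Schwarz turns this into
   a collision probability.  This gives E[exp(-l w)] <= 1, i.e. exp(-l K (q - theta)) is a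
   supermartingale, so q falls below theta at some point of any horizon with probability at most
   exp(-l K (q_0 - theta)) <= exp(-l K / (2r)) = n^(-K / (288 r sqrt n ln n)). *)

lemma nn_integral_pmf_commute:
  "(\<integral>\<^sup>+x. \<integral>\<^sup>+y. f x y \<partial>measure_pmf N \<partial>measure_pmf M) =
   (\<integral>\<^sup>+y. \<integral>\<^sup>+x. f x y \<partial>measure_pmf M \<partial>measure_pmf N)"
proof -
  have "(\<integral>\<^sup>+x. \<integral>\<^sup>+y. f x y \<partial>N \<partial>M) = (\<integral>\<^sup>+z. f (snd z) (fst z) \<partial>pair_pmf N M)"
    by (subst pair_commute_pmf) (simp add: nn_integral_pair_pmf' case_prod_unfold)
  also have "\<dots> = (\<integral>\<^sup>+y. \<integral>\<^sup>+x. f x y \<partial>M \<partial>N)"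
    by (simp add: nn_integral_pair_pmf')
  finally show ?thesis .
qed

lemma map_pmf_eq_bernoulli_pmf: "map_pmf (\<lambda>v. v = a) V = bernoulli_pmf (pmf V a)"
proof (rule pmf_eqI)
  fix b :: bool
  have "pmf (map_pmf (\<lambda>v. v = a) V) b = measure_pmf.prob V ((\<lambda>v. v = a) -` {b})"
    by (simp add: pmf_map)
  also have "\<dots> = (if b then pmf V a else 1 - pmf V a)"
    using measure_pmf.prob_compl[of "{a}" V]
    by (auto simp: measure_pmf_single vimage_def Compl_eq_Diff_UNIV[symmetric] Collect_neg_eq)
  finally show "pmf (map_pmf (\<lambda>v. v = a) V) b = pmf (bernoulli_pmf (pmf V a)) b"
    by (simp add: pmf_le_1)
qed

lemma nn_integral_pmf_point_test:
  assumes "\<And>b. f b \<ge> 0"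
  shows "(\<integral>\<^sup>+v. ennreal (f (v = a)) \<partial>measure_pmf V) =
         ennreal (pmf V a * f True + (1 - pmf V a) * f False)"
proof -
  have "(\<integral>\<^sup>+v. ennreal (f (v = a)) \<partial>V) = (\<integral>\<^sup>+b. ennreal (f b) \<partial>bernoulli_pmf (pmf V a))"
    by (simp flip: map_pmf_eq_bernoulli_pmf)
  also have "\<dots> = ennreal (f True) * pmf V a + ennreal (f False) * (1 - pmf V a)"
    by (simp add: pmf_le_1)
  finally show ?thesis
    using assms by (simp add: pmf_le_1 ennreal_mult' mult.commute)
qed

lemma Pi_pmf_count_concentration:
  fixes P :: "'a \<Rightarrow> 'b pmf"
  assumes fin: "finite B" and ne: "B \<noteq> {}" and \<epsilon>: "\<epsilon> \<ge> 0"
  shows "\<exists>\<mu>. measure_pmf.prob (Pi_pmf B d P) {g. \<epsilon> \<le> \<bar>real (card {j\<in>B. g j = v}) - \<mu>\<bar>}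
           \<le> 2 * exp (-2 * \<epsilon>\<^sup>2 / card B)"
proof -
  let ?G = "Pi_pmf B d P"
  let ?X = "\<lambda>j g. of_bool (g j = v) :: real"
  interpret Hoeffding_ineq "measure_pmf ?G" B ?X "\<lambda>_. 0" "\<lambda>_. 1"
      "\<Sum>j\<in>B. measure_pmf.expectation ?G (?X j)"
  proof unfold_locales
    show "prob_space.indep_vars (measure_pmf ?G) (\<lambda>_. borel) ?X B"
      by (intro prob_space.indep_vars_compose2[OF _ indep_vars_Pi_pmf[OF fin]])
         (auto simp: measure_pmf.prob_space_axioms)
  qed (auto simp: fin)
  have hits: "(\<Sum>j\<in>B. ?X j g) = real (card {j\<in>B. g j = v})" for g
    using fin by (simp add: of_bool_def sum.If_cases Int_def conj_commute)
  show ?thesis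
    using Hoeffding_ineq_abs_ge[OF \<epsilon>] fin ne by (auto simp: hits card_gt_0_iff)
qed

lemma card_nat_window:
  fixes \<mu> w :: real
  assumes "w \<ge> 0"
  shows "finite {k::nat. \<bar>real k - \<mu>\<bar> < w}" and "real (card {k::nat. \<bar>real k - \<mu>\<bar> < w}) \<le> 2 * w + 1"
proof -
  define m where "m = nat \<lceil>\<mu> - w\<rceil>"
  define l where "l = nat \<lfloor>2 * w\<rfloor>"
  have sub: "{k::nat. \<bar>real k - \<mu>\<bar> < w} \<subseteq> {m..m+l}"
  proof
    fix k assume "k \<in> {k::nat. \<bar>real k - \<mu>\<bar> < w}"
    then have "\<mu> - w < real k" and "real k < \<mu> + w" by auto
    then show "k \<in> {m..m+l}"
      unfolding m_def l_def using assms by (auto simp: nat_le_iff) linarith+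
  qed
  then show "finite {k::nat. \<bar>real k - \<mu>\<bar> < w}"
    using finite_subset by blast
  have "card {k::nat. \<bar>real k - \<mu>\<bar> < w} \<le> l + 1"
    using card_mono[OF _ sub] by simp
  moreover have "real l \<le> 2 * w" unfolding l_def using assms by linarith
  ultimately show "real (card {k::nat. \<bar>real k - \<mu>\<bar> < w}) \<le> 2 * w + 1"
    by linarith
qed

lemma pair_pmf_diagonal_ge:
  assumes fin: "finite T"
  shows "(measure_pmf.prob \<rho> T)\<^sup>2 \<le> real (card T) * measure_pmf.prob (pair_pmf \<rho> \<rho>) {z. fst z = snd z}"
proof -
  have "(measure_pmf.prob \<rho> T)\<^sup>2 = (\<Sum>k\<in>T. 1 * pmf \<rho> k)\<^sup>2"
    using fin by (simp add: measure_measure_pmf_finite)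
  also have "\<dots> \<le> (\<Sum>k\<in>T. 1\<^sup>2) * (\<Sum>k\<in>T. (pmf \<rho> k)\<^sup>2)"
    by (rule Cauchy_Schwarz_ineq_sum)
  also have "(\<Sum>k\<in>T. (pmf \<rho> k)\<^sup>2) = measure_pmf.prob (pair_pmf \<rho> \<rho>) ((\<lambda>k. (k, k)) ` T)"
    using fin by (simp add: measure_measure_pmf_finite sum.reindex inj_on_def pmf_pair power2_eq_square)
  also have "\<dots> \<le> measure_pmf.prob (pair_pmf \<rho> \<rho>) {z. fst z = snd z}"
    by (intro measure_pmf.finite_measure_mono) auto
  finally show ?thesis
    by (simp add: mult_left_mono)
qed

lemma exp_minus_two_le: "exp (-2::real) \<le> 1/4"
proof -
  have "(2::real) \<le> exp 1"
    using exp_ge_add_one_self[of 1] by simp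
  then have "(4::real) \<le> exp 1 * exp 1"
    using mult_mono[of 2 "exp 1" 2 "exp (1::real)"] by simp
  then show ?thesis
    by (simp add: exp_minus mult_exp_exp field_simps)
qed

lemma Pi_pmf_count_collision:
  fixes P :: "'a \<Rightarrow> 'b pmf" and d v :: 'b
  assumes fin: "finite B" and ne: "B \<noteq> {}"
  defines "G \<equiv> Pi_pmf B d P" and "hits \<equiv> \<lambda>g. card {j\<in>B. g j = v}"
  shows "1 / (12 * sqrt (card B)) \<le> measure_pmf.prob (pair_pmf G G) {z. hits (fst z) = hits (snd z)}"
proof -
  define N where "N = real (card B)"
  have N1: "1 \<le> N" using fin ne unfolding N_def by (simp add: Suc_leI card_gt_0_iff)
  obtain \<mu> where tail: "measure_pmf.prob G {g. sqrt N \<le> \<bar>real (hits g) - \<mu>\<bar>} \<le> 2 * exp (-2)"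
    using Pi_pmf_count_concentration[OF fin ne, of "sqrt N" d P v] N1
    unfolding G_def hits_def N_def by auto
  define T where "T = {k::nat. \<bar>real k - \<mu>\<bar> < sqrt N}"
  have "1 \<le> sqrt N" using N1 by simp
  then have T: "finite T" "real (card T) \<le> 3 * sqrt N"
    using card_nat_window[of "sqrt N" \<mu>] unfolding T_def by linarith+
  have "measure_pmf.prob G {g. hits g \<in> T} = 1 - measure_pmf.prob G {g. sqrt N \<le> \<bar>real (hits g) - \<mu>\<bar>}"
    using measure_pmf.prob_compl[of "{g. sqrt N \<le> \<bar>real (hits g) - \<mu>\<bar>}" G]
    by (simp add: T_def Compl_eq_Diff_UNIV[symmetric] Collect_neg_eq[symmetric] not_le)
  then have "1/2 \<le> measure_pmf.prob (map_pmf hits G) T"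
    using tail exp_minus_two_le by (simp add: vimage_def)
  then have "(1/2)\<^sup>2 \<le> (measure_pmf.prob (map_pmf hits G) T)\<^sup>2"
    by (intro power_mono) auto
  also have "\<dots> \<le> real (card T) * measure_pmf.prob (pair_pmf (map_pmf hits G) (map_pmf hits G)) {z. fst z = snd z}"
    by (rule pair_pmf_diagonal_ge[OF T(1)])
  also have "pair_pmf (map_pmf hits G) (map_pmf hits G) = map_pmf (map_prod hits hits) (pair_pmf G G)"
    by (simp add: map_pair[symmetric] map_prod_def)
  also have "measure_pmf.prob \<dots> {z. fst z = snd z} = measure_pmf.prob (pair_pmf G G) {z. hits (fst z) = hits (snd z)}"
    by (simp add: vimage_def map_prod_def case_prod_unfold)
  also have "real (card T) * \<dots> \<le> 3 * sqrt N * measure_pmf.prob (pair_pmf G G) {z. hits (fst z) = hits (snd z)}"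
    using T(2) by (intro mult_right_mono) auto
  finally show ?thesis
    using N1 unfolding N_def by (simp add: field_simps)
qed

lemma r_onemax_fun_upd:
  assumes "i < n"
  shows "r_onemax n r (g(i := v)) = of_bool (v = r - 1) + card {j\<in>{..<n} - {i}. g j = r - 1}"
proof -
  define S where "S = {j\<in>{..<n} - {i}. g j = r - 1}"
  have "finite S" "i \<notin> S" unfolding S_def by auto
  moreover have "{j. j < n \<and> (g(i := v)) j = r - 1} = (if v = r - 1 then insert i S else S)"
    unfolding S_def using assms by auto
  ultimately show ?thesis
    unfolding r_onemax_def S_def[symmetric] by auto
qed

lemma sample_string_split:
  assumes "i < n"
  shows "sample_string n r p = map_pmf (\<lambda>(v, g). g(i := v))
           (pair_pmf (pos_pmf r p i) (Pi_pmf ({..<n} - {i}) 0 (pos_pmf r p)))"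
proof -
  have "{..<n} = insert i ({..<n} - {i})" using assms by auto
  then show ?thesis
    unfolding sample_string_def by (metis Pi_pmf_insert finite_Diff finite_lessThan Diff_iff insertI1)
qed

definition cga_duel :: "nat \<Rightarrow> nat \<Rightarrow> real \<Rightarrow> (nat \<Rightarrow> nat \<Rightarrow> real) \<Rightarrow> (nat \<Rightarrow> nat) \<Rightarrow> (nat \<Rightarrow> nat)
    \<Rightarrow> (nat \<Rightarrow> nat \<Rightarrow> real)" where
  "cga_duel n r K p x y =
     (if r_onemax n r x < r_onemax n r y then cga_update K p y x else cga_update K p x y)"

lemma cga_step_eq_map_pmf:
  "cga_step n r K p =
     map_pmf (case_prod (cga_duel n r K p)) (pair_pmf (sample_string n r p) (sample_string n r p))"
  unfolding cga_step_def cga_duel_def pair_pmf_def by (simp add: map_bind_pmf)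

lemma nn_integral_pair_map_pmf:
  "(\<integral>\<^sup>+z. f z \<partial>pair_pmf (map_pmf h (pair_pmf V G)) (map_pmf h (pair_pmf V G))) =
   (\<integral>\<^sup>+g1. \<integral>\<^sup>+g2. \<integral>\<^sup>+v1. \<integral>\<^sup>+v2. f (h (v1, g1), h (v2, g2)) \<partial>V \<partial>V \<partial>G \<partial>G)"
  by (simp add: nn_integral_pair_pmf' nn_integral_pmf_commute[where M = V and N = G])

(* A and B say whether position i of the two samples holds r-1, and a and b count the r-1 entries
   at the other positions; the value is K times the resulting change of p_{i,r-1}. *)
definition duel_gain :: "bool \<Rightarrow> bool \<Rightarrow> nat \<Rightarrow> nat \<Rightarrow> real" where
  "duel_gain A B a b =
     (if of_bool A + a < of_bool B + b then of_bool B - of_bool A else of_bool A - of_bool B)"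

lemma cga_update_duel:
  fixes n r i :: nat and g1 g2 :: "nat \<Rightarrow> nat"
  assumes "i < n"
  defines "hits \<equiv> \<lambda>g. card {j\<in>{..<n} - {i}. g j = r - 1}"
  shows "cga_duel n r K p (g1(i := v1)) (g2(i := v2)) i (r - 1)
         = p i (r - 1) + duel_gain (v1 = r - 1) (v2 = r - 1) (hits g1) (hits g2) / K"
  using assms by (auto simp: cga_duel_def cga_update_def duel_gain_def r_onemax_fun_upd)

lemma duel_gain_exp_moment:
  fixes V :: "'a pmf" and u :: 'a and l :: real
  assumes l: "0 \<le> l"
  defines "s \<equiv> pmf V u * (1 - pmf V u)"
  shows "(\<integral>\<^sup>+v1. \<integral>\<^sup>+v2. ennreal (exp (- l * duel_gain (v1 = u) (v2 = u) a b)) \<partial>V \<partial>V)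
         \<le> ennreal (1 - 2 * s * (1 - exp (- l)) + (if a = b then 0 else s * (exp l - exp (- l))))"
proof -
  define q where "q = pmf V u"
  define Q where "Q = (\<lambda>A B. exp (- l * duel_gain A B a b))"
  have q: "0 \<le> q" "q \<le> 1" unfolding q_def by (auto simp: pmf_le_1)
  have "(\<integral>\<^sup>+v1. \<integral>\<^sup>+v2. ennreal (Q (v1 = u) (v2 = u)) \<partial>V \<partial>V)
        = (\<integral>\<^sup>+v1. ennreal (q * Q (v1 = u) True + (1 - q) * Q (v1 = u) False) \<partial>V)"
    unfolding q_def Q_def by (intro nn_integral_cong nn_integral_pmf_point_test) simp
  also have "\<dots> = ennreal (q * (q * Q True True + (1 - q) * Q True False)
                  + (1 - q) * (q * Q False True + (1 - q) * Q False False))"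
    unfolding q_def using q by (intro nn_integral_pmf_point_test) (simp add: Q_def q_def)
  also have "\<dots> \<le> ennreal (1 - 2 * s * (1 - exp (- l)) + (if a = b then 0 else s * (exp l - exp (- l))))"
  proof (rule ennreal_leI)
    have sum: "q * (q * Q True True + (1 - q) * Q True False) + (1 - q) * (q * Q False True + (1 - q) * Q False False)
          = 1 - 2 * s + s * (Q True False + Q False True)"
      unfolding s_def q_def[symmetric] Q_def duel_gain_def by (simp add: algebra_simps)
    have "Q True False + Q False True \<le> 2 * exp (- l) + (if a = b then 0 else exp l - exp (- l))"
      unfolding Q_def duel_gain_def using l by auto
    moreover have "0 \<le> s" unfolding s_def q_def[symmetric] using q by simp
    ultimately have "s * (Q True False + Q False True) \<le> s * (2 * exp (- l) + (if a = b then 0 else exp l - exp (- l)))"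
      by (intro mult_left_mono)
    then show "q * (q * Q True True + (1 - q) * Q True False) + (1 - q) * (q * Q False True + (1 - q) * Q False False)
          \<le> 1 - 2 * s * (1 - exp (- l)) + (if a = b then 0 else s * (exp l - exp (- l)))"
      unfolding sum by (cases "a = b") (simp_all add: algebra_simps)
  qed
  finally show ?thesis
    unfolding Q_def .
qed

lemma exp_diff_mult_one_minus_le:
  fixes l :: real
  assumes "0 \<le> l" "l \<le> 1"
  shows "(exp l - exp (- l)) * (1 - l) \<le> 2 * (1 - exp (- l))"
proof -
  have "exp l * (1 - l) \<le> exp l * exp (- l)"
    using exp_ge_add_one_self[of "- l"] by (intro mult_left_mono) auto
  then have "(exp l + 1) * (1 - l) \<le> 2"
    using assms by (simp add: exp_minus algebra_simps)
  then have "exp (- l) * (exp l - 1) * ((exp l + 1) * (1 - l)) \<le> exp (- l) * (exp l - 1) * 2"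
    using assms by (intro mult_left_mono) auto
  then show ?thesis
    by (simp add: exp_minus field_simps)
qed

lemma duel_gain_exp_moment_le_1:
  fixes V :: "'a pmf" and G :: "'g pmf" and hits :: "'g \<Rightarrow> nat" and l :: real
  assumes l: "0 \<le> l" "l \<le> 1"
    and tie: "l \<le> measure_pmf.prob (pair_pmf G G) {z. hits (fst z) = hits (snd z)}"
  shows "(\<integral>\<^sup>+g1. \<integral>\<^sup>+g2. \<integral>\<^sup>+v1. \<integral>\<^sup>+v2.
            ennreal (exp (- l * duel_gain (v1 = u) (v2 = u) (hits g1) (hits g2))) \<partial>V \<partial>V \<partial>G \<partial>G) \<le> 1"
proof -
  define s where "s = pmf V u * (1 - pmf V u)"
  define c1 where "c1 = 1 - 2 * s * (1 - exp (- l))"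
  define c2 where "c2 = s * (exp l - exp (- l))"
  define D where "D = {z. hits (fst z) \<noteq> hits (snd z)}"
  have "0 \<le> s"
    unfolding s_def by (simp add: pmf_le_1)
  moreover have "1/4 - s = (pmf V u - 1/2)\<^sup>2"
    unfolding s_def by (simp add: power2_eq_square algebra_simps)
  ultimately have s: "0 \<le> s" "2 * s \<le> 1"
    using zero_le_power2[of "pmf V u - 1/2"] by linarith+
  have "2 * s * (1 - exp (- l)) \<le> 1"
    using l(1) by (intro mult_le_one[OF s(2)]) auto
  then have c: "0 \<le> c1" "0 \<le> c2"
    unfolding c1_def c2_def using s l by auto
  have "(\<integral>\<^sup>+g1. \<integral>\<^sup>+g2. \<integral>\<^sup>+v1. \<integral>\<^sup>+v2.
            ennreal (exp (- l * duel_gain (v1 = u) (v2 = u) (hits g1) (hits g2))) \<partial>V \<partial>V \<partial>G \<partial>G)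
        \<le> (\<integral>\<^sup>+g1. \<integral>\<^sup>+g2. ennreal (c1 + c2 * indicator D (g1, g2)) \<partial>G \<partial>G)"
  proof (intro nn_integral_mono)
    fix g1 g2
    have "c1 + c2 * indicator D (g1, g2)
          = 1 - 2 * s * (1 - exp (- l)) + (if hits g1 = hits g2 then 0 else s * (exp l - exp (- l)))"
      unfolding c1_def c2_def D_def by (simp add: indicator_def)
    then show "(\<integral>\<^sup>+v1. \<integral>\<^sup>+v2. ennreal (exp (- l * duel_gain (v1 = u) (v2 = u) (hits g1) (hits g2))) \<partial>V \<partial>V)
          \<le> ennreal (c1 + c2 * indicator D (g1, g2))"
      unfolding s_def by (simp only: duel_gain_exp_moment[OF l(1)])
  qed
  also have "\<dots> = (\<integral>\<^sup>+z. ennreal c1 + ennreal c2 * indicator D z \<partial>pair_pmf G G)"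
    using c unfolding nn_integral_pair_pmf' by (intro nn_integral_cong) (auto simp: indicator_def)
  also have "\<dots> = ennreal c1 + ennreal c2 * emeasure (pair_pmf G G) D"
    by (simp add: nn_integral_add nn_integral_cmult_indicator measure_pmf.emeasure_space_1)
  also have "\<dots> \<le> ennreal c1 + ennreal c2 * ennreal (1 - l)"
  proof -
    have "measure_pmf.prob (pair_pmf G G) D \<le> 1 - l"
      using tie measure_pmf.prob_compl[of D "pair_pmf G G"]
      by (simp add: D_def Compl_eq_Diff_UNIV[symmetric] Collect_neg_eq[symmetric])
    then show ?thesis
      by (intro add_left_mono mult_left_mono) (auto simp: measure_pmf.emeasure_eq_measure intro: ennreal_leI)
  qed
  also have "\<dots> = ennreal (c1 + c2 * (1 - l))"
    using c l by (simp add: ennreal_mult')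
  also have "\<dots> \<le> 1"
    using mult_left_mono[OF exp_diff_mult_one_minus_le[OF l] s(1)]
    unfolding c1_def c2_def by (simp add: algebra_simps)
  finally show ?thesis .
qed

lemma cga_step_exp_moment:
  fixes n r i :: nat and K l :: real
  assumes i: "i < n" and n: "2 \<le> n" and K: "K \<noteq> 0"
    and l: "0 \<le> l" "l \<le> 1 / (12 * sqrt (real n))"
  shows "(\<integral>\<^sup>+q. ennreal (exp (- l * K * (q i (r - 1) - p i (r - 1)))) \<partial>cga_step n r K p) \<le> 1"
proof -
  define B where "B = {..<n} - {i}"
  define G where "G = Pi_pmf B 0 (pos_pmf r p)"
  define hits where "hits = (\<lambda>g::nat \<Rightarrow> nat. card {j\<in>B. g j = r - 1})"
  have "finite B" "card B = n - 1"
    using i unfolding B_def by auto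
  then have B: "finite B" "B \<noteq> {}" "0 < card B" "card B \<le> n"
    using n by auto
  have "1 / (12 * sqrt (real n)) \<le> 1 / 12"
    using n by (intro frac_le) auto
  then have l1: "l \<le> 1"
    using l(2) by linarith
  have "1 / (12 * sqrt (real n)) \<le> 1 / (12 * sqrt (card B))"
    using B by (intro frac_le) auto
  then have tie: "l \<le> measure_pmf.prob (pair_pmf G G) {z. hits (fst z) = hits (snd z)}"
    using l(2) Pi_pmf_count_collision[OF B(1,2), of 0 "pos_pmf r p" "r - 1"]
    unfolding G_def hits_def by linarith
  have gain: "- l * K * (cga_duel n r K p (g1(i := v1)) (g2(i := v2)) i (r - 1) - p i (r - 1))
              = - l * duel_gain (v1 = r - 1) (v2 = r - 1) (hits g1) (hits g2)" for g1 g2 v1 v2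
    using K unfolding hits_def B_def cga_update_duel[OF i] by simp
  have "(\<integral>\<^sup>+q. ennreal (exp (- l * K * (q i (r - 1) - p i (r - 1)))) \<partial>cga_step n r K p)
      = (\<integral>\<^sup>+g1. \<integral>\<^sup>+g2. \<integral>\<^sup>+v1. \<integral>\<^sup>+v2.
           ennreal (exp (- l * K * (cga_duel n r K p (g1(i := v1)) (g2(i := v2)) i (r - 1) - p i (r - 1))))
           \<partial>pos_pmf r p i \<partial>pos_pmf r p i \<partial>G \<partial>G)"
    unfolding cga_step_eq_map_pmf sample_string_split[OF i] nn_integral_map_pmf nn_integral_pair_map_pmf
      G_def B_def by simp
  also have "\<dots> = (\<integral>\<^sup>+g1. \<integral>\<^sup>+g2. \<integral>\<^sup>+v1. \<integral>\<^sup>+v2.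
           ennreal (exp (- l * duel_gain (v1 = r - 1) (v2 = r - 1) (hits g1) (hits g2)))
           \<partial>pos_pmf r p i \<partial>pos_pmf r p i \<partial>G \<partial>G)"
    by (simp only: gain)
  also have "\<dots> \<le> 1"
    by (rule duel_gain_exp_moment_le_1[OF l(1) l1 tie])
  finally show ?thesis .
qed

lemma cga_path_drop_prob_le:
  fixes n r i :: nat and K l \<theta> :: real
  assumes i: "i < n" and n: "2 \<le> n" and K: "0 < K"
    and l: "0 \<le> l" "l \<le> 1 / (12 * sqrt (real n))"
  shows "emeasure (cga_path n r K p m) {qs. \<exists>q\<in>set qs. q i (r - 1) < \<theta>}
         \<le> ennreal (exp (- l * K * (p i (r - 1) - \<theta>)))"
proof (induction m arbitrary: p)
  case 0
  then show ?case by simp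
next
  case (Suc m)
  define E where "E = {qs. \<exists>q\<in>set qs. q i (r - 1) < \<theta>}"
  define \<Phi> where "\<Phi> = (\<lambda>q :: nat \<Rightarrow> nat \<Rightarrow> real. exp (- l * K * (q i (r - 1) - \<theta>)))"
  have "emeasure (cga_path n r K p (Suc m)) E
        = (\<integral>\<^sup>+q. emeasure (cga_path n r K q m) ((#) q -` E) \<partial>cga_step n r K p)"
    by simp
  also have "\<dots> \<le> (\<integral>\<^sup>+q. ennreal (\<Phi> q) \<partial>cga_step n r K p)"
  proof (intro nn_integral_mono)
    fix q :: "nat \<Rightarrow> nat \<Rightarrow> real"
    show "emeasure (cga_path n r K q m) ((#) q -` E) \<le> ennreal (\<Phi> q)"
    proof (cases "q i (r - 1) < \<theta>")
      case True
      have "0 \<le> - l * K * (q i (r - 1) - \<theta>)"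
        using True l(1) K by (intro mult_nonpos_nonpos) auto
      then have "ennreal 1 \<le> ennreal (\<Phi> q)"
        unfolding \<Phi>_def by (intro ennreal_leI) simp
      then show ?thesis
        using measure_pmf.emeasure_le_1 order_trans by (metis ennreal_1)
    next
      case False
      then have "(#) q -` E = E" unfolding E_def by auto
      then show ?thesis
        using Suc.IH[of q] unfolding E_def \<Phi>_def by simp
    qed
  qed
  also have "\<dots> = (\<integral>\<^sup>+q. ennreal (\<Phi> p) * ennreal (exp (- l * K * (q i (r - 1) - p i (r - 1)))) \<partial>cga_step n r K p)"
  proof (intro nn_integral_cong)
    fix q :: "nat \<Rightarrow> nat \<Rightarrow> real"
    have split: "- l * K * (q i (r - 1) - \<theta>) = - l * K * (p i (r - 1) - \<theta>) + - l * K * (q i (r - 1) - p i (r - 1))"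
      by (simp add: algebra_simps)
    show "ennreal (\<Phi> q) = ennreal (\<Phi> p) * ennreal (exp (- l * K * (q i (r - 1) - p i (r - 1))))"
      unfolding \<Phi>_def split exp_add by (simp add: ennreal_mult)
  qed
  also have "\<dots> = ennreal (\<Phi> p) * (\<integral>\<^sup>+q. ennreal (exp (- l * K * (q i (r - 1) - p i (r - 1)))) \<partial>cga_step n r K p)"
    by (rule nn_integral_cmult) simp
  also have "\<dots> \<le> ennreal (\<Phi> p)"
    using mult_left_mono[OF cga_step_exp_moment[OF i n _ l]] K by simp
  finally show ?case
    unfolding E_def \<Phi>_def .
qed

theorem lemma2:
  fixes d :: nat
  shows "\<exists>c>0. \<exists>c'>0. \<exists>n0::nat. \<forall>n r t i. \<forall>K::real. \<forall>k::real. \<forall>p.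
     n \<ge> n0 \<longrightarrow> r \<ge> 2 \<longrightarrow> i < n \<longrightarrow> k > 0 \<longrightarrow>
     K \<ge> c * real r * sqrt (real n) * ln (real n) \<longrightarrow>
     K \<le> real n ^ d \<longrightarrow> real r \<le> real n ^ d \<longrightarrow>
     p \<in> set_pmf (cga_state n r K t) \<longrightarrow> p i (r - 1) \<ge> k / real r \<longrightarrow>
     measure_pmf.prob
       (cga_path n r K p (nat \<lfloor>c' * K * sqrt (real n) * ln (real r)\<rfloor>))
       {qs. \<exists>q\<in>set qs. q i (r - 1) < k / real r - 1 / (2 * real r)}
     \<le> real n powr (- (K / (288 * real r * sqrt (real n) * ln (real n))))"
proof (intro exI[of _ "1::real"] exI[of _ "2::nat"] conjI allI impI zero_less_one)
  (* The drop bound holds for every horizon. *)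
  fix n r t i :: nat and K k :: real and p :: "nat \<Rightarrow> nat \<Rightarrow> real"
  assume n: "2 \<le> n" and r: "2 \<le> r" and i: "i < n"
    and K_ge: "1 * real r * sqrt (real n) * ln (real n) \<le> K"
    and p: "k / real r \<le> p i (r - 1)"
  define m where "m = nat \<lfloor>1 * K * sqrt (real n) * ln (real r)\<rfloor>"
  define l where "l = 1 / (144 * sqrt (real n))"
  define \<theta> where "\<theta> = k / real r - 1 / (2 * real r)"
  have pos: "0 < ln (real n)" "0 < sqrt (real n)" "0 < real r"
    using n r by auto
  then have K: "0 < K"
    using K_ge mult_pos_pos[OF mult_pos_pos[OF pos(3) pos(2)] pos(1)] by linarith
  have l: "0 \<le> l" "l \<le> 1 / (12 * sqrt (real n))"
    unfolding l_def using pos by (auto simp: field_simps)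
  have "measure_pmf.prob (cga_path n r K p m) {qs. \<exists>q\<in>set qs. q i (r - 1) < \<theta>}
        \<le> exp (- l * K * (p i (r - 1) - \<theta>))"
    using cga_path_drop_prob_le[OF i n K l, where p = p and m = m and \<theta> = \<theta>]
    by (simp add: measure_pmf.emeasure_eq_measure)
  also have "\<dots> \<le> exp (- l * K * (1 / (2 * real r)))"
  proof -
    have "1 / (2 * real r) \<le> p i (r - 1) - \<theta>"
      using p unfolding \<theta>_def by simp
    then have "l * K * (1 / (2 * real r)) \<le> l * K * (p i (r - 1) - \<theta>)"
      using l(1) K by (intro mult_left_mono) auto
    then show ?thesis
      by simp
  qed
  also have "\<dots> = real n powr (- (K / (288 * real r * sqrt (real n) * ln (real n))))"
    using pos by (simp add: powr_def l_def field_simps)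
  finally show "measure_pmf.prob (cga_path n r K p (nat \<lfloor>1 * K * sqrt (real n) * ln (real r)\<rfloor>))
       {qs. \<exists>q\<in>set qs. q i (r - 1) < k / real r - 1 / (2 * real r)}
     \<le> real n powr (- (K / (288 * real r * sqrt (real n) * ln (real n))))"
    unfolding m_def \<theta>_def .
qed

end
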